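(* Let $G$ be a connected graph with $n\ge 2$ vertices, $m$ edges and Randi\'c index $R=R(G)$. Then $$EE(G) > e^{m/R} + (n-1) - \frac{m}{R}.$$
   Context: All graphs are finite, simple and undirected. For a graph $G$ with adjacency matrix $A(G)$ having eigenvalues $\lambda_1\ge\lambda_2\ge\cdots\ge\lambda_n$, the Estrada index is $EE(G)=\sum_{i=1}^n e^{\lambda_i}$. Writing $d(i)$ for the degree of vertex $i$ and $\mathcal{E}(G)$ for the edge set, the general Randi\'c index is $R_\alpha(G)=\sum_{ij\in\mathcal{E}(G)}(d(i)d(j))^\alpha$ for real $\alpha$, and the Randi\'c index is $R=R_{-1/2}(G)=\sum_{ij\in\mathcal{E}(G)}(d(i)d(j))^{-1/2}$. *)

theory Defs
  imports "HOL-Analysis.Analysis" "Jordan_Normal_Form.Char_Poly"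
begin

definition simple_graph :: "nat \<Rightarrow> (nat \<Rightarrow> nat \<Rightarrow> bool) \<Rightarrow> bool" where
  "simple_graph n adj \<longleftrightarrow>
     (\<forall>i j. adj i j \<longrightarrow> i < n \<and> j < n) \<and>
     (\<forall>i j. adj i j \<longrightarrow> adj j i) \<and>
     (\<forall>i. \<not> adj i i)"

definition connected_graph :: "nat \<Rightarrow> (nat \<Rightarrow> nat \<Rightarrow> bool) \<Rightarrow> bool" where
  "connected_graph n adj \<longleftrightarrow> (\<forall>i<n. \<forall>j<n. adj\<^sup>*\<^sup>* i j)"

definition graph_edges :: "nat \<Rightarrow> (nat \<Rightarrow> nat \<Rightarrow> bool) \<Rightarrow> nat set set" where
  "graph_edges n adj = {{i, j} | i j. i < n \<and> j < n \<and> adj i j}"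

definition degree :: "nat \<Rightarrow> (nat \<Rightarrow> nat \<Rightarrow> bool) \<Rightarrow> nat \<Rightarrow> nat" where
  "degree n adj i = card {j. j < n \<and> adj i j}"

definition adj_matrix :: "nat \<Rightarrow> (nat \<Rightarrow> nat \<Rightarrow> bool) \<Rightarrow> real mat" where
  "adj_matrix n adj = mat n n (\<lambda>(i, j). if adj i j then 1 else 0)"

text \<open>Eigenvalues of the adjacency matrix, with multiplicity: the roots of its characteristic
  polynomial (which splits over the reals, the matrix being symmetric).\<close>

definition adj_eigenvalues :: "nat \<Rightarrow> (nat \<Rightarrow> nat \<Rightarrow> bool) \<Rightarrow> real multiset" where
  "adj_eigenvalues n adj = proots (char_poly (adj_matrix n adj))"

definition estrada_index :: "nat \<Rightarrow> (nat \<Rightarrow> nat \<Rightarrow> bool) \<Rightarrow> real" where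
  "estrada_index n adj = (\<Sum>x\<in>#adj_eigenvalues n adj. exp x)"

definition general_randic :: "real \<Rightarrow> nat \<Rightarrow> (nat \<Rightarrow> nat \<Rightarrow> bool) \<Rightarrow> real" where
  "general_randic \<alpha> n adj =
     (\<Sum>e\<in>graph_edges n adj. (\<Prod>v\<in>e. real (degree n adj v)) powr \<alpha>)"

definition randic :: "nat \<Rightarrow> (nat \<Rightarrow> nat \<Rightarrow> bool) \<Rightarrow> real" where
  "randic n adj = general_randic (-1/2) n adj"

end

theory Submission
  imports Defs "Jordan_Normal_Form.Schur_Decomposition"
begin

text \<open>Let \<open>\<lambda>\<close> be the largest adjacency eigenvalue, i.e. the maximum of the Rayleigh quotient
  \<open>x\<^sup>TAx / x\<^sup>Tx\<close>. Testing the quotient with \<open>x\<^sub>i = \<surd>d\<^sub>i\<close> gives \<open>\<lambda> \<ge> S / m\<close>, where \<open>S\<close> is the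
  sum of \<open>\<surd>(d\<^sub>i d\<^sub>j)\<close> over the edges \<open>ij\<close>, and Cauchy-Schwarz gives \<open>S R \<ge> m\<^sup>2\<close>; hence
  \<open>\<lambda> \<ge> m / R > 0\<close>. The eigenvalues sum to the trace \<open>0\<close>, so besides \<open>\<lambda>\<close> some other eigenvalue is
  nonzero, and \<open>e\<^sup>x \<ge> 1 + x\<close> (strict for \<open>x \<noteq> 0\<close>) over the remaining \<open>n - 1\<close> eigenvalues yields
  \<open>EE > e\<^sup>\<lambda> + (n - 1) - \<lambda>\<close>. Finally \<open>t \<mapsto> e\<^sup>t - t\<close> is increasing on \<open>[0, \<infinity>)\<close>.\<close>

lemma exp_gt_one_plus:
  fixes x :: real
  assumes "x \<noteq> 0"
  shows "1 + x < exp x"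
proof (cases "1 + x/2 \<ge> 0")
  case True
  have "(1 + x/2)\<^sup>2 \<le> (exp (x/2))\<^sup>2"
    using True by (intro power_mono exp_ge_add_one_self) auto
  also have "(exp (x/2))\<^sup>2 = exp x"
    by (simp add: power2_eq_square exp_add[symmetric])
  finally have "1 + x + x\<^sup>2/4 \<le> exp x"
    by (simp add: power2_eq_square algebra_simps)
  moreover have "x\<^sup>2 > 0"
    using assms by simp
  ultimately show ?thesis
    by linarith
next
  case False
  then show ?thesis
    using exp_gt_zero[of x] by linarith
qed

lemma exp_minus_self_mono:
  fixes s t :: real
  assumes "0 \<le> s" "s \<le> t"
  shows "exp s - s \<le> exp t - t"
proof -
  have "exp s * (1 + (t - s)) \<le> exp s * exp (t - s)"
    using assms by (intro mult_left_mono exp_ge_add_one_self) auto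
  moreover have "1 * (t - s) \<le> exp s * (t - s)"
    using assms by (intro mult_right_mono) auto
  ultimately show ?thesis
    by (simp add: exp_diff algebra_simps)
qed

lemma sum_mset_exp_ge:
  fixes M :: "real multiset"
  shows "real (size M) + sum_mset M \<le> (\<Sum>x\<in>#M. exp x)"
proof (induction M)
  case (add x M)
  with exp_ge_add_one_self[of x] show ?case
    by (simp add: algebra_simps del: exp_ge_add_one_self)
qed simp

text \<open>A multiset of reals summing to \<open>0\<close> and containing \<open>c \<noteq> 0\<close> contains a second nonzero
  element, which makes the bound \<open>e\<^sup>x \<ge> 1 + x\<close> strict on \<open>M - {#c#}\<close>.\<close>

lemma sum_mset_exp_gt:
  fixes M :: "real multiset"
  assumes "c \<in># M" "sum_mset M = 0" "c \<noteq> 0"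
  shows "exp c + (real (size M) - 1) - c < (\<Sum>x\<in>#M. exp x)"
proof -
  obtain M' where M: "M = add_mset c M'"
    using assms(1) by (metis insert_DiffM)
  have "sum_mset M' = - c"
    using assms(2) M by simp
  then obtain x where "x \<in># M'" "x \<noteq> 0"
    using assms(3) by (metis neg_equal_0_iff_equal sum_mset.neutral)
  then obtain M'' where M': "M' = add_mset x M''"
    by (metis insert_DiffM)
  have "1 + x < exp x"
    using \<open>x \<noteq> 0\<close> by (rule exp_gt_one_plus)
  moreover have "real (size M'') + sum_mset M'' \<le> (\<Sum>x\<in>#M''. exp x)"
    by (rule sum_mset_exp_ge)
  ultimately show ?thesis
    using \<open>sum_mset M' = - c\<close> unfolding M M' by simp
qed

lemma card_squared_le_sum_mult_sum_inverse:
  fixes w :: "'a \<Rightarrow> real"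
  assumes "\<And>a. a \<in> A \<Longrightarrow> w a > 0"
  shows "(real (card A))\<^sup>2 \<le> (\<Sum>a\<in>A. w a) * (\<Sum>a\<in>A. 1 / w a)"
proof -
  have "(\<Sum>a\<in>A. sqrt (w a) * (1 / sqrt (w a)))\<^sup>2
          \<le> (\<Sum>a\<in>A. (sqrt (w a))\<^sup>2) * (\<Sum>a\<in>A. (1 / sqrt (w a))\<^sup>2)"
    by (rule Cauchy_Schwarz_ineq_sum)
  also have "(\<Sum>a\<in>A. (sqrt (w a))\<^sup>2) = (\<Sum>a\<in>A. w a)"
    using assms by (intro sum.cong) (auto simp: less_imp_le)
  also have "(\<Sum>a\<in>A. (1 / sqrt (w a))\<^sup>2) = (\<Sum>a\<in>A. 1 / w a)"
    using assms by (intro sum.cong) (auto simp: power_divide less_imp_le)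
  also have "(\<Sum>a\<in>A. sqrt (w a) * (1 / sqrt (w a))) = real (card A)"
    using assms by (simp add: less_imp_neq[symmetric])
  finally show ?thesis .
qed

section \<open>The maximal eigenvalue of a real symmetric matrix\<close>

text \<open>Vectors of \<open>\<real>\<^sup>n\<close> are modelled as functions \<open>nat \<Rightarrow> real\<close> of which only the first \<open>n\<close> values
  matter, which keeps the variational argument free of carrier bookkeeping.\<close>

definition quad_form :: "nat \<Rightarrow> (nat \<Rightarrow> nat \<Rightarrow> real) \<Rightarrow> (nat \<Rightarrow> real) \<Rightarrow> real" where
  "quad_form n a y = (\<Sum>i<n. \<Sum>j<n. a i j * y i * y j)"

text \<open>The coordinates beyond \<open>n\<close> are pinned to \<open>0\<close> so that the set is compact in the product
  topology.\<close>

lemma compact_unit_sphere_prefix: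
  "compact {x :: nat \<Rightarrow> real. (\<forall>i. x i \<in> (if i < n then {-1..1} else {0})) \<and> (\<Sum>i<n. (x i)\<^sup>2) = 1}"
proof -
  have "compact (PiE UNIV (\<lambda>i::nat. if i < n then {-1..1::real} else {0}))"
    using compactin_PiE[of "\<lambda>_. euclidean" UNIV "\<lambda>i::nat. if i < n then {-1..1::real} else {0}"]
    by (simp add: euclidean_product_topology)
  moreover have "closed {x :: nat \<Rightarrow> real. (\<Sum>i<n. (x i)\<^sup>2) = 1}"
    by (intro closed_Collect_eq continuous_intros continuous_on_product_coordinates)
  ultimately have "compact (PiE UNIV (\<lambda>i::nat. if i < n then {-1..1::real} else {0})
                    \<inter> {x. (\<Sum>i<n. (x i)\<^sup>2) = 1})"
    by (rule compact_Int_closed)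
  then show ?thesis
    by (simp add: PiE_def Pi_def Int_def)
qed

lemma quad_form_max_on_unit_sphere:
  assumes "n > 0"
  obtains x where "(\<Sum>i<n. (x i)\<^sup>2) = 1"
    and "\<And>z. (\<Sum>i<n. (z i)\<^sup>2) = 1 \<Longrightarrow> quad_form n a z \<le> quad_form n a x"
proof -
  define K where "K = {x :: nat \<Rightarrow> real. (\<forall>i. x i \<in> (if i < n then {-1..1} else {0}))
                                         \<and> (\<Sum>i<n. (x i)\<^sup>2) = 1}"
  have "(\<lambda>i. if i = 0 then 1 else 0) \<in> K"
    using assms by (auto simp: K_def power2_eq_square if_distrib cong: if_cong)
  moreover have "continuous_on K (quad_form n a)"
    unfolding quad_form_def
    by (intro continuous_intros continuous_on_product_coordinates continuous_on_subset[OF _ subset_UNIV])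
  ultimately obtain x where x: "x \<in> K" and max: "\<And>z. z \<in> K \<Longrightarrow> quad_form n a z \<le> quad_form n a x"
    using continuous_attains_sup[OF compact_unit_sphere_prefix[of n, folded K_def]] by blast
  have "quad_form n a z \<le> quad_form n a x" if z_norm: "(\<Sum>i<n. (z i)\<^sup>2) = 1" for z
  proof -
    define z' where "z' i = (if i < n then z i else 0)" for i
    have "-1 \<le> z i \<and> z i \<le> 1" if "i < n" for i
    proof -
      have "(z i)\<^sup>2 \<le> (\<Sum>i<n. (z i)\<^sup>2)"
        using that by (intro member_le_sum) auto
      then have "\<bar>z i\<bar> \<le> 1"
        using z_norm abs_le_square_iff[of "z i" 1] by simp
      then show ?thesis
        by (simp add: abs_le_iff)
    qed
    then have "z' \<in> K"
      using z_norm by (auto simp: K_def z'_def)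
    moreover have "quad_form n a z' = quad_form n a z"
      by (simp add: quad_form_def z'_def)
    ultimately show ?thesis
      using max by metis
  qed
  moreover have "(\<Sum>i<n. (x i)\<^sup>2) = 1"
    using x by (simp add: K_def)
  ultimately show ?thesis
    using that by blast
qed

lemma quad_form_le_sum_squares:
  assumes "\<And>z. (\<Sum>i<n. (z i)\<^sup>2) = 1 \<Longrightarrow> quad_form n a z \<le> c"
  shows "quad_form n a y \<le> c * (\<Sum>i<n. (y i)\<^sup>2)"
proof (cases "\<forall>i<n. y i = 0")
  case True
  then show ?thesis
    by (simp add: quad_form_def)
next
  case False
  then have pos: "(\<Sum>i<n. (y i)\<^sup>2) > 0"
    by (metis finite_lessThan lessThan_iff sum_pos2 zero_le_power2 zero_less_power2)
  define s where "s = sqrt (\<Sum>i<n. (y i)\<^sup>2)"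
  have s: "s > 0" "s\<^sup>2 = (\<Sum>i<n. (y i)\<^sup>2)"
    using pos by (auto simp: s_def)
  have "(\<Sum>i<n. (y i / s)\<^sup>2) = 1"
    using s pos by (simp add: power_divide flip: sum_divide_distrib)
  then have "quad_form n a (\<lambda>i. y i / s) \<le> c"
    by (rule assms)
  moreover have "quad_form n a (\<lambda>i. y i / s) = quad_form n a y / s\<^sup>2"
    by (simp add: quad_form_def sum_divide_distrib power2_eq_square)
  ultimately show ?thesis
    using s pos by (simp add: divide_le_eq mult.commute)
qed

lemma quad_form_add_scaled:
  assumes sym: "\<And>i j. i < n \<Longrightarrow> j < n \<Longrightarrow> a i j = a j i"
  shows "quad_form n a (\<lambda>i. x i + t * y i)
           = quad_form n a x + 2 * t * (\<Sum>i<n. y i * (\<Sum>j<n. a i j * x j)) + t\<^sup>2 * quad_form n a y"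
proof -
  have swap: "(\<Sum>i<n. \<Sum>j<n. a i j * x i * y j) = (\<Sum>i<n. \<Sum>j<n. a i j * y i * x j)"
    by (subst sum.swap) (auto simp: sym mult.commute mult.left_commute intro!: sum.cong)
  have "quad_form n a (\<lambda>i. x i + t * y i)
          = quad_form n a x + t * (\<Sum>i<n. \<Sum>j<n. a i j * x i * y j)
            + t * (\<Sum>i<n. \<Sum>j<n. a i j * y i * x j) + t\<^sup>2 * quad_form n a y"
    by (simp add: quad_form_def algebra_simps power2_eq_square sum.distrib sum_distrib_left)
  then show ?thesis
    unfolding swap by (simp add: sum_distrib_left algebra_simps)
qed

lemma sum_squares_add_scaled:
  fixes x y :: "nat \<Rightarrow> real"
  shows "(\<Sum>i<n. (x i + t * y i)\<^sup>2)
           = (\<Sum>i<n. (x i)\<^sup>2) + 2 * t * (\<Sum>i<n. y i * x i) + t\<^sup>2 * (\<Sum>i<n. (y i)\<^sup>2)"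
  by (simp add: algebra_simps power2_eq_square sum.distrib sum_distrib_left)

lemma eq_0_if_quadratic_nonpos:
  fixes L q :: real
  assumes "\<And>t. 2 * t * L + t\<^sup>2 * q \<le> 0"
  shows "L = 0"
proof (rule ccontr)
  assume "L \<noteq> 0"
  define e where "e = 1 / (1 + \<bar>q\<bar>)"
  have e: "e > 0" "e * \<bar>q\<bar> < 1"
    unfolding e_def by (auto simp: field_simps)
  have "L\<^sup>2 * (e * (2 + e * q)) \<le> 0"
    using assms[of "e * L"] by (simp add: algebra_simps power2_eq_square)
  moreover have "e * q \<ge> - (e * \<bar>q\<bar>)"
    using e(1) by (simp add: abs_if mult_less_0_iff)
  then have "L\<^sup>2 * (e * (2 + e * q)) > 0"
    using e \<open>L \<noteq> 0\<close> by (intro mult_pos_pos) auto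
  ultimately show False
    by linarith
qed

text \<open>First variation: perturbing a maximiser \<open>x\<close> of the Rayleigh quotient by \<open>t y\<close> shows that
  \<open>A x - c x\<close> is orthogonal to every \<open>y\<close>.\<close>

lemma quad_form_maximizer_eigenvector:
  assumes sym: "\<And>i j. i < n \<Longrightarrow> j < n \<Longrightarrow> a i j = a j i"
    and max: "\<And>y. quad_form n a y \<le> c * (\<Sum>i<n. (y i)\<^sup>2)"
    and attained: "quad_form n a x = c * (\<Sum>i<n. (x i)\<^sup>2)"
    and "k < n"
  shows "(\<Sum>j<n. a k j * x j) = c * x k"
proof -
  define w where "w i = (\<Sum>j<n. a i j * x j) - c * x i" for i
  have orth: "(\<Sum>i<n. y i * (\<Sum>j<n. a i j * x j)) - c * (\<Sum>i<n. y i * x i) = 0" for y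
  proof (rule eq_0_if_quadratic_nonpos[where q = "quad_form n a y - c * (\<Sum>i<n. (y i)\<^sup>2)"])
    fix t :: real
    show "2 * t * ((\<Sum>i<n. y i * (\<Sum>j<n. a i j * x j)) - c * (\<Sum>i<n. y i * x i))
            + t\<^sup>2 * (quad_form n a y - c * (\<Sum>i<n. (y i)\<^sup>2)) \<le> 0"
    proof -
      have "quad_form n a x + 2 * t * (\<Sum>i<n. y i * (\<Sum>j<n. a i j * x j)) + t\<^sup>2 * quad_form n a y
              \<le> c * ((\<Sum>i<n. (x i)\<^sup>2) + 2 * t * (\<Sum>i<n. y i * x i) + t\<^sup>2 * (\<Sum>i<n. (y i)\<^sup>2))"
        using max[of "\<lambda>i. x i + t * y i"]
        by (simp only: quad_form_add_scaled[OF sym] sum_squares_add_scaled)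
      then show ?thesis
        using attained by (simp add: algebra_simps)
    qed
  qed
  have "(\<Sum>i<n. (w i)\<^sup>2) = (\<Sum>i<n. w i * (\<Sum>j<n. a i j * x j)) - c * (\<Sum>i<n. w i * x i)"
    by (simp add: w_def power2_eq_square algebra_simps sum_subtractf sum_distrib_left)
  then have "(\<Sum>i<n. (w i)\<^sup>2) = 0"
    using orth[of w] by simp
  then have "w k = 0"
    using \<open>k < n\<close> by (simp add: sum_nonneg_eq_0_iff)
  then show ?thesis
    by (simp add: w_def)
qed

lemma symmetric_mat_eigenvalue_bounds_quad_form:
  fixes A :: "real mat"
  assumes A: "A \<in> carrier_mat n n"
    and sym: "\<And>i j. i < n \<Longrightarrow> j < n \<Longrightarrow> A $$ (i, j) = A $$ (j, i)"
    and "n > 0"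
  obtains c where "eigenvalue A c"
    and "\<And>y. quad_form n (\<lambda>i j. A $$ (i, j)) y \<le> c * (\<Sum>i<n. (y i)\<^sup>2)"
proof -
  obtain x where x_norm: "(\<Sum>i<n. (x i)\<^sup>2) = 1"
    and max_sphere: "\<And>z. (\<Sum>i<n. (z i)\<^sup>2) = 1
                       \<Longrightarrow> quad_form n (\<lambda>i j. A $$ (i, j)) z \<le> quad_form n (\<lambda>i j. A $$ (i, j)) x"
    using quad_form_max_on_unit_sphere[OF \<open>n > 0\<close>] by blast
  define c where "c = quad_form n (\<lambda>i j. A $$ (i, j)) x"
  have max: "quad_form n (\<lambda>i j. A $$ (i, j)) y \<le> c * (\<Sum>i<n. (y i)\<^sup>2)" for y
    unfolding c_def by (rule quad_form_le_sum_squares) (rule max_sphere)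
  have eigen: "(\<Sum>j<n. A $$ (k, j) * x j) = c * x k" if "k < n" for k
    by (rule quad_form_maximizer_eigenvector[OF sym max]) (use x_norm that in \<open>simp_all add: c_def\<close>)
  have "vec n x \<noteq> 0\<^sub>v n"
  proof
    assume "vec n x = 0\<^sub>v n"
    then have "\<forall>i<n. x i = 0"
      by (metis index_vec index_zero_vec(1))
    then show False
      using x_norm by simp
  qed
  moreover have "A *\<^sub>v vec n x = c \<cdot>\<^sub>v vec n x"
    using A eigen by (intro eq_vecI) (auto simp: scalar_prod_def atLeast0LessThan)
  ultimately have "eigenvector A (vec n x) c"
    using A by (simp add: eigenvector_def vec_carrier)
  then have "eigenvalue A c"
    by (auto simp: eigenvalue_def)
  with max that show ?thesis
    by blast
qed

section \<open>Eigenvalues and trace of a real symmetric matrix\<close>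

definition mat_trace :: "'a::comm_ring_1 mat \<Rightarrow> 'a" where
  "mat_trace A = (\<Sum>i<dim_row A. A $$ (i, i))"

lemma mat_trace_mult_comm:
  fixes A B :: "'a::comm_ring_1 mat"
  assumes "A \<in> carrier_mat n m" "B \<in> carrier_mat m n"
  shows "mat_trace (A * B) = mat_trace (B * A)"
proof -
  have "mat_trace (A * B) = (\<Sum>i<n. \<Sum>k<m. A $$ (i, k) * B $$ (k, i))"
    using assms by (simp add: mat_trace_def scalar_prod_def atLeast0LessThan)
  also have "\<dots> = (\<Sum>k<m. \<Sum>i<n. B $$ (k, i) * A $$ (i, k))"
    by (subst sum.swap) (simp add: mult.commute)
  also have "\<dots> = mat_trace (B * A)"
    using assms by (simp add: mat_trace_def scalar_prod_def atLeast0LessThan)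
  finally show ?thesis .
qed

lemma mat_trace_similar:
  fixes A B :: "'a::comm_ring_1 mat"
  assumes "similar_mat A B"
  shows "mat_trace A = mat_trace B"
proof -
  obtain n P Q where carrier: "{A, B, P, Q} \<subseteq> carrier_mat n n"
    and QP: "Q * P = 1\<^sub>m n" and AB: "A = P * B * Q"
    using similar_matD[OF assms] by blast
  then have "mat_trace A = mat_trace (Q * (P * B))"
    using mat_trace_mult_comm[of "P * B" n n Q] by auto
  also have "Q * (P * B) = (Q * P) * B"
    using carrier assoc_mult_mat[of Q n n P n B n] by auto
  also have "\<dots> = B"
    using carrier QP left_mult_one_mat[of B n n] by simp
  finally show ?thesis .
qed

lemma hermitian_eigenvalue_real:
  fixes A :: "complex mat"
  assumes A: "A \<in> carrier_mat n n"
    and herm: "\<And>i j. i < n \<Longrightarrow> j < n \<Longrightarrow> cnj (A $$ (i, j)) = A $$ (j, i)"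
    and "eigenvalue A d"
  shows "d \<in> \<real>"
proof -
  obtain v where v: "v \<in> carrier_vec n" "v \<noteq> 0\<^sub>v n" "A *\<^sub>v v = d \<cdot>\<^sub>v v"
    using assms(3) A unfolding eigenvalue_def eigenvector_def by auto
  have row: "(\<Sum>j<n. A $$ (i, j) * v $ j) = d * v $ i" if "i < n" for i
    using arg_cong[OF v(3), of "\<lambda>u. u $ i"] that A v(1)
    by (simp add: scalar_prod_def atLeast0LessThan)
  define N where "N = (\<Sum>i<n. cnj (v $ i) * v $ i)"
  define S where "S = (\<Sum>i<n. \<Sum>j<n. cnj (v $ i) * A $$ (i, j) * v $ j)"
  have "S = (\<Sum>i<n. cnj (v $ i) * (\<Sum>j<n. A $$ (i, j) * v $ j))"
    by (simp add: S_def sum_distrib_left mult.assoc)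
  also have "\<dots> = (\<Sum>i<n. d * (cnj (v $ i) * v $ i))"
    by (intro sum.cong refl) (simp add: row mult.left_commute)
  also have "\<dots> = d * N"
    by (simp add: N_def sum_distrib_left)
  finally have "S = d * N" .
  moreover have "cnj S = S"
  proof -
    have "cnj S = (\<Sum>i<n. \<Sum>j<n. v $ i * A $$ (j, i) * cnj (v $ j))"
      by (simp add: S_def herm)
    also have "\<dots> = S"
      unfolding S_def by (subst sum.swap) (simp add: mult.commute mult.left_commute)
    finally show ?thesis .
  qed
  moreover have "cnj N = N"
    by (simp add: N_def mult.commute)
  moreover have "N \<noteq> 0"
  proof -
    have "N = v \<bullet>c v"
      using v(1) by (simp add: N_def scalar_prod_def atLeast0LessThan mult.commute)
    then show ?thesis
      using conjugate_square_eq_0_vec[OF v(1)] v(2) by simp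
  qed
  ultimately have "cnj d = d"
    by (metis complex_cnj_mult mult_cancel_right)
  then show ?thesis
    by (simp add: Reals_cnj_iff)
qed

lemma hermitian_char_poly_splits_real:
  fixes A :: "complex mat"
  assumes A: "A \<in> carrier_mat n n"
    and herm: "\<And>i j. i < n \<Longrightarrow> j < n \<Longrightarrow> cnj (A $$ (i, j)) = A $$ (j, i)"
  obtains rs where "char_poly A = (\<Prod>r\<leftarrow>rs. [:- complex_of_real r, 1:])"
    and "length rs = n" and "complex_of_real (sum_list rs) = mat_trace A"
proof -
  obtain as where "char_poly A = (\<Prod>a\<leftarrow>as. [:-a, 1:])"
    using char_poly_factorized[OF A] by blast
  then obtain B where B: "B \<in> carrier_mat n n" "upper_triangular B" "similar_mat A B"
    using schur_decomposition_exists[OF A] by blast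
  define ds where "ds = diag_mat B"
  have char_poly_ds: "char_poly A = (\<Prod>a\<leftarrow>ds. [:-a, 1:])"
    using char_poly_similar[OF B(3)] char_poly_upper_triangular[OF B(1,2)] by (simp add: ds_def)
  have "d \<in> \<real>" if "d \<in> set ds" for d
  proof (rule hermitian_eigenvalue_real[OF A herm])
    have "poly (char_poly A) d = 0"
      using \<open>d \<in> set ds\<close> by (simp add: char_poly_ds poly_prod_list prod_list_zero_iff o_def)
    then show "eigenvalue A d"
      using eigenvalue_root_char_poly[OF A] by simp
  qed
  then obtain rs where ds_rs: "ds = map complex_of_real rs"
    by (metis Reals_def ex_map_conv image_iff)
  have "complex_of_real (sum_list rs) = sum_list ds"
    unfolding ds_rs by (induction rs) auto
  also have "\<dots> = mat_trace B"
    using B(1) by (simp add: mat_trace_def ds_def diag_mat_def sum_list_sum_nth atLeast0LessThan)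
  also have "\<dots> = mat_trace A"
    using mat_trace_similar[OF B(3)] by simp
  finally have "complex_of_real (sum_list rs) = mat_trace A" .
  moreover have "length rs = n"
    using B(1) length_map[of complex_of_real rs] by (simp add: ds_def diag_mat_def flip: ds_rs)
  ultimately show ?thesis
    using that char_poly_ds by (simp add: ds_rs o_def)
qed

lemma real_symmetric_char_poly_splits:
  fixes A :: "real mat"
  assumes A: "A \<in> carrier_mat n n"
    and sym: "\<And>i j. i < n \<Longrightarrow> j < n \<Longrightarrow> A $$ (i, j) = A $$ (j, i)"
  obtains rs where "char_poly A = (\<Prod>r\<leftarrow>rs. [:-r, 1:])"
    and "length rs = n" and "sum_list rs = mat_trace A"
proof -
  define Ac where "Ac = map_mat complex_of_real A"
  have Ac: "Ac \<in> carrier_mat n n"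
    using A by (simp add: Ac_def)
  obtain rs where char_poly_Ac: "char_poly Ac = (\<Prod>r\<leftarrow>rs. [:- complex_of_real r, 1:])"
    and "length rs = n" and trace: "complex_of_real (sum_list rs) = mat_trace Ac"
    using hermitian_char_poly_splits_real[OF Ac] A sym by (auto simp: Ac_def)
  have "char_poly A = (\<Prod>r\<leftarrow>rs. [:-r, 1:])"
  proof (rule poly_ext)
    fix x
    have "char_poly Ac = map_poly complex_of_real (char_poly A)"
      using of_real_hom.char_poly_hom[OF A] by (simp add: Ac_def)
    then have "complex_of_real (poly (char_poly A) x) = poly (char_poly Ac) (of_real x)"
      by simp
    also have "\<dots> = complex_of_real (\<Prod>r\<leftarrow>rs. x - r)"
      by (simp add: char_poly_Ac poly_prod_list o_def of_real_hom.hom_prod_list)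
    finally show "poly (char_poly A) x = poly (\<Prod>r\<leftarrow>rs. [:-r, 1:]) x"
      by (simp add: poly_prod_list o_def)
  qed
  moreover have "mat_trace Ac = complex_of_real (mat_trace A)"
    using A by (simp add: mat_trace_def Ac_def)
  ultimately show ?thesis
    using that \<open>length rs = n\<close> trace by simp
qed

lemma proots_prod_linear: "proots (\<Prod>r\<leftarrow>rs. [:-r, 1:]) = mset (rs :: real list)"
proof (induction rs)
  case (Cons r rs)
  have "(\<Prod>r\<leftarrow>rs. [:-r, 1:]) \<noteq> (0 :: real poly)"
    by (auto simp: prod_list_zero_iff)
  then show ?case
    using Cons.IH by (simp add: proots_mult del: mult_pCons_left)
qed simp

section \<open>Graphs: arcs, degrees and the Randic index\<close>

definition arcs :: "nat \<Rightarrow> (nat \<Rightarrow> nat \<Rightarrow> bool) \<Rightarrow> (nat \<times> nat) set" where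
  "arcs n adj = {(i, j). i < n \<and> j < n \<and> adj i j}"

definition forward_arcs :: "nat \<Rightarrow> (nat \<Rightarrow> nat \<Rightarrow> bool) \<Rightarrow> (nat \<times> nat) set" where
  "forward_arcs n adj = {(i, j). i < j \<and> j < n \<and> adj i j}"

lemma finite_forward_arcs [simp]: "finite (forward_arcs n adj)"
  by (rule finite_subset[of _ "{..<n} \<times> {..<n}"]) (auto simp: forward_arcs_def)

lemma sum_arcs_eq_double_sum:
  "(\<Sum>(i, j)\<in>arcs n adj. g i j) = (\<Sum>i<n. \<Sum>j<n. if adj i j then g i j else 0)"
proof -
  have "arcs n adj = (SIGMA i:{..<n}. {j \<in> {..<n}. adj i j})"
    by (auto simp: arcs_def)
  then show ?thesis
    by (simp add: sum.Sigma[symmetric] sum.If_cases Int_def)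
qed

lemma sum_arcs_eq_twice_sum_forward_arcs:
  fixes g :: "nat \<Rightarrow> nat \<Rightarrow> 'a::comm_semiring_1"
  assumes "simple_graph n adj" and g_sym: "\<And>i j. g i j = g j i"
  shows "(\<Sum>(i, j)\<in>arcs n adj. g i j) = 2 * (\<Sum>(i, j)\<in>forward_arcs n adj. g i j)"
proof -
  have adj_sym: "\<And>i j. adj i j \<Longrightarrow> adj j i" and irrefl: "\<And>i. \<not> adj i i"
    using assms(1) by (auto simp: simple_graph_def)
  have split: "arcs n adj = forward_arcs n adj \<union> prod.swap ` forward_arcs n adj"
  proof (intro equalityI subsetI)
    fix p assume "p \<in> arcs n adj"
    then obtain i j where p: "p = (i, j)" "i < n" "j < n" "adj i j"
      by (auto simp: arcs_def)
    then have "i < j \<or> j < i"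
      using irrefl by (metis linorder_neqE_nat)
    then show "p \<in> forward_arcs n adj \<union> prod.swap ` forward_arcs n adj"
      using p adj_sym by (auto simp: forward_arcs_def image_iff)
  qed (auto simp: arcs_def forward_arcs_def adj_sym)
  have "(\<Sum>(i, j)\<in>prod.swap ` forward_arcs n adj. g i j) = (\<Sum>(i, j)\<in>forward_arcs n adj. g i j)"
    by (subst sum.reindex) (auto simp: g_sym intro!: sum.cong)
  moreover have "forward_arcs n adj \<inter> prod.swap ` forward_arcs n adj = {}"
    by (auto simp: forward_arcs_def)
  ultimately show ?thesis
    by (simp add: split sum.union_disjoint mult_2)
qed

lemma sum_degree_eq_card_arcs: "(\<Sum>i<n. degree n adj i) = card (arcs n adj)"
  using sum_arcs_eq_double_sum[of "\<lambda>_ _. 1::nat" n adj]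
  by (simp add: degree_def sum.If_cases Int_def)

lemma degree_pos:
  assumes "simple_graph n adj" "adj i j"
  shows "0 < degree n adj i"
proof -
  have "j \<in> {k. k < n \<and> adj i k}"
    using assms by (simp add: simple_graph_def)
  then show ?thesis
    unfolding degree_def by (metis card_gt_0_iff empty_iff finite_Collect_conjI finite_Collect_less_nat)
qed

lemma degree_pos_forward_arc:
  assumes "simple_graph n adj" "(i, j) \<in> forward_arcs n adj"
  shows "0 < degree n adj i" "0 < degree n adj j"
  using assms degree_pos[OF assms(1), of i j] degree_pos[OF assms(1), of j i]
  by (auto simp: forward_arcs_def simple_graph_def)

lemma graph_edges_eq_image_forward_arcs:
  assumes "simple_graph n adj"
  shows "graph_edges n adj = (\<lambda>(i, j). {i, j}) ` forward_arcs n adj"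
proof (intro equalityI subsetI)
  fix e assume "e \<in> graph_edges n adj"
  then obtain i j where e: "e = {i, j}" "i < n" "j < n" "adj i j"
    by (auto simp: graph_edges_def)
  then have "i < j \<or> j < i"
    using assms by (metis linorder_neqE_nat simple_graph_def)
  then have "(i, j) \<in> forward_arcs n adj \<or> (j, i) \<in> forward_arcs n adj"
    using e assms by (auto simp: forward_arcs_def simple_graph_def)
  then show "e \<in> (\<lambda>(i, j). {i, j}) ` forward_arcs n adj"
    by (elim disjE) (auto intro!: rev_image_eqI simp: e insert_commute)
qed (force simp: graph_edges_def forward_arcs_def)

lemma sum_graph_edges:
  assumes "simple_graph n adj"
  shows "(\<Sum>e\<in>graph_edges n adj. f e) = (\<Sum>(i, j)\<in>forward_arcs n adj. f {i, j})"
proof -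
  have "inj_on (\<lambda>(i, j). {i, j}) (forward_arcs n adj)"
    by (auto simp: inj_on_def forward_arcs_def doubleton_eq_iff)
  then show ?thesis
    by (simp add: graph_edges_eq_image_forward_arcs[OF assms] sum.reindex case_prod_unfold)
qed

lemma randic_eq_sum_forward_arcs:
  assumes "simple_graph n adj"
  shows "randic n adj = (\<Sum>(i, j)\<in>forward_arcs n adj.
                           1 / sqrt (real (degree n adj i) * real (degree n adj j)))"
  unfolding randic_def general_randic_def sum_graph_edges[OF assms]
proof (intro sum.cong refl, clarify)
  fix i j assume "(i, j) \<in> forward_arcs n adj"
  then have "i \<noteq> j" "0 < degree n adj i" "0 < degree n adj j"
    using degree_pos_forward_arc[OF assms] by (auto simp: forward_arcs_def)
  then show "(\<Prod>v\<in>{i, j}. real (degree n adj v)) powr (-1/2)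
               = 1 / sqrt (real (degree n adj i) * real (degree n adj j))"
    by (simp add: powr_minus_divide powr_half_sqrt[symmetric])
qed

lemma quad_form_adj_matrix:
  assumes "simple_graph n adj"
  shows "quad_form n (\<lambda>i j. adj_matrix n adj $$ (i, j)) y
           = 2 * (\<Sum>(i, j)\<in>forward_arcs n adj. y i * y j)"
proof -
  have "quad_form n (\<lambda>i j. adj_matrix n adj $$ (i, j)) y = (\<Sum>(i, j)\<in>arcs n adj. y i * y j)"
    by (auto simp: quad_form_def sum_arcs_eq_double_sum adj_matrix_def intro!: sum.cong)
  also have "\<dots> = 2 * (\<Sum>(i, j)\<in>forward_arcs n adj. y i * y j)"
    using assms by (rule sum_arcs_eq_twice_sum_forward_arcs) (simp add: mult.commute)
  finally show ?thesis .
qed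

lemma connected_graph_forward_arcs_nonempty:
  assumes "simple_graph n adj" "connected_graph n adj" "2 \<le> n"
  shows "forward_arcs n adj \<noteq> {}"
proof -
  have "adj\<^sup>*\<^sup>* 0 1"
    using assms(2,3) by (simp add: connected_graph_def)
  then have "\<exists>k. adj 0 k"
    by (cases rule: converse_rtranclpE) auto
  then obtain k where "adj 0 k"
    by blast
  moreover have "k \<noteq> 0" "k < n"
    using assms(1) \<open>adj 0 k\<close> unfolding simple_graph_def by metis+
  ultimately have "(0, k) \<in> forward_arcs n adj"
    by (simp add: forward_arcs_def)
  then show ?thesis
    by blast
qed

lemma adj_matrix_carrier [simp]: "adj_matrix n adj \<in> carrier_mat n n"
  by (simp add: adj_matrix_def)

lemma adj_matrix_symmetric:
  assumes "simple_graph n adj" "i < n" "j < n"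
  shows "adj_matrix n adj $$ (i, j) = adj_matrix n adj $$ (j, i)"
  using assms by (auto simp: adj_matrix_def simple_graph_def)

lemma adj_eigenvalues_size_sum:
  assumes "simple_graph n adj"
  shows "size (adj_eigenvalues n adj) = n" and "sum_mset (adj_eigenvalues n adj) = 0"
proof -
  obtain rs where "char_poly (adj_matrix n adj) = (\<Prod>r\<leftarrow>rs. [:-r, 1:])"
    and "length rs = n" and "sum_list rs = mat_trace (adj_matrix n adj)"
    using real_symmetric_char_poly_splits[OF adj_matrix_carrier adj_matrix_symmetric[OF assms]]
    by blast
  moreover have "mat_trace (adj_matrix n adj) = 0"
    using assms by (simp add: adj_matrix_def mat_trace_def simple_graph_def)
  ultimately show "size (adj_eigenvalues n adj) = n" "sum_mset (adj_eigenvalues n adj) = 0"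
    by (simp_all add: adj_eigenvalues_def proots_prod_linear sum_mset_sum_list)
qed

lemma eigenvalue_in_adj_eigenvalues:
  assumes "eigenvalue (adj_matrix n adj) c"
  shows "c \<in># adj_eigenvalues n adj"
proof -
  have "char_poly (adj_matrix n adj) \<noteq> 0"
    using degree_monic_char_poly[OF adj_matrix_carrier, of n adj] by auto
  then show ?thesis
    using assms eigenvalue_root_char_poly[OF adj_matrix_carrier] by (simp add: adj_eigenvalues_def)
qed

lemma sum_sqrt_degree_products_le:
  assumes sg: "simple_graph n adj"
    and bound: "\<And>y. quad_form n (\<lambda>i j. adj_matrix n adj $$ (i, j)) y \<le> c * (\<Sum>i<n. (y i)\<^sup>2)"
  shows "(\<Sum>(i, j)\<in>forward_arcs n adj. sqrt (real (degree n adj i) * real (degree n adj j)))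
           \<le> c * real (card (forward_arcs n adj))"
proof -
  define d where "d i = real (degree n adj i)" for i
  have "quad_form n (\<lambda>i j. adj_matrix n adj $$ (i, j)) (\<lambda>i. sqrt (d i))
          = 2 * (\<Sum>(i, j)\<in>forward_arcs n adj. sqrt (d i * d j))"
    by (simp add: quad_form_adj_matrix[OF sg] case_prod_unfold real_sqrt_mult)
  moreover have "(\<Sum>i<n. (sqrt (d i))\<^sup>2) = 2 * real (card (forward_arcs n adj))"
    using sum_arcs_eq_twice_sum_forward_arcs[OF sg, of "\<lambda>_ _. 1::nat"]
    by (simp add: d_def flip: of_nat_sum sum_degree_eq_card_arcs)
  ultimately show ?thesis
    using bound[of "\<lambda>i. sqrt (d i)"] by (simp add: d_def)
qed

lemma edges_div_randic_le:
  assumes sg: "simple_graph n adj" and ne: "forward_arcs n adj \<noteq> {}"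
    and bound: "\<And>y. quad_form n (\<lambda>i j. adj_matrix n adj $$ (i, j)) y \<le> c * (\<Sum>i<n. (y i)\<^sup>2)"
  shows "0 < real (card (graph_edges n adj)) / randic n adj"
    and "real (card (graph_edges n adj)) / randic n adj \<le> c"
proof -
  define F where "F = forward_arcs n adj"
  define d where "d i = real (degree n adj i)" for i
  define w where "w = (\<lambda>(i, j). sqrt (d i * d j))"
  have w_pos: "w p > 0" if "p \<in> F" for p
  proof (cases p)
    case (Pair i j)
    then show ?thesis
      using that degree_pos_forward_arc[OF sg, of i j] by (simp add: F_def w_def d_def)
  qed
  have m: "real (card (graph_edges n adj)) = real (card F)"
    using sum_graph_edges[OF sg, of "\<lambda>_. 1::nat"] by (simp add: F_def)
  have R: "randic n adj = (\<Sum>p\<in>F. 1 / w p)"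
    by (simp add: randic_eq_sum_forward_arcs[OF sg] F_def w_def d_def case_prod_unfold)
  have "card F > 0"
    using ne by (simp add: F_def card_gt_0_iff)
  have R_pos: "randic n adj > 0"
    unfolding R using ne w_pos by (intro sum_pos) (auto simp: F_def)
  have "(real (card F))\<^sup>2 \<le> (\<Sum>p\<in>F. w p) * randic n adj"
    unfolding R using w_pos by (rule card_squared_le_sum_mult_sum_inverse)
  also have "\<dots> \<le> c * real (card F) * randic n adj"
    using sum_sqrt_degree_products_le[OF sg bound] R_pos
    by (intro mult_right_mono) (simp_all add: F_def w_def d_def case_prod_unfold)
  finally have "real (card F) * real (card F) \<le> c * real (card F) * randic n adj"
    by (simp add: power2_eq_square)
  then show "real (card (graph_edges n adj)) / randic n adj \<le> c"
    using \<open>card F > 0\<close> R_pos by (simp add: m divide_le_eq mult.commute mult.left_commute)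
  show "0 < real (card (graph_edges n adj)) / randic n adj"
    using \<open>card F > 0\<close> R_pos by (simp add: m)
qed

theorem mainTheorem1:
  fixes n :: nat and adj :: "nat \<Rightarrow> nat \<Rightarrow> bool"
  assumes "simple_graph n adj" and "connected_graph n adj" and "n \<ge> 2"
  defines "m \<equiv> real (card (graph_edges n adj))"
      and "R \<equiv> randic n adj"
  shows "estrada_index n adj > exp (m / R) + (real n - 1) - m / R"
proof -
  obtain c where "eigenvalue (adj_matrix n adj) c"
    and bound: "\<And>y. quad_form n (\<lambda>i j. adj_matrix n adj $$ (i, j)) y \<le> c * (\<Sum>i<n. (y i)\<^sup>2)"
    using symmetric_mat_eigenvalue_bounds_quad_form[OF adj_matrix_carrier adj_matrix_symmetric[OF assms(1)]]
      assms(3) by auto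
  have "forward_arcs n adj \<noteq> {}"
    using connected_graph_forward_arcs_nonempty assms(1-3) by blast
  then have "0 < m / R" "m / R \<le> c"
    unfolding m_def R_def using edges_div_randic_le[OF assms(1) _ bound] by blast+
  then have "exp (m / R) + (real n - 1) - m / R \<le> exp c + (real n - 1) - c"
    using exp_minus_self_mono by fastforce
  also have "\<dots> < estrada_index n adj"
    using sum_mset_exp_gt[OF eigenvalue_in_adj_eigenvalues[OF \<open>eigenvalue (adj_matrix n adj) c\<close>]]
      adj_eigenvalues_size_sum[OF assms(1)] \<open>0 < m / R\<close> \<open>m / R \<le> c\<close>
    by (simp add: estrada_index_def)
  finally show ?thesis .
qed

end
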